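(* Let $\Omega$ be the unit square (if $d=2$) or the unit cube (if $d=3$), and let $\vec u:\Omega\times[0,T]\to\mathbb{R}^d$ with $\vec u\in C^0([0,T];W^{1,\infty}(\Omega))$ satisfy $\vec u\cdot\vec n=0$ on $\partial\Omega$, where $\vec n$ is the outward unit normal. Let $0<\Delta t<T$ be such that $\Delta t\,\|\vec u\|_{C^0([0,T];W^{1,\infty}(\Omega))}<1$. For $\vec x\in\Omega$ and $t\in[\Delta t,T]$ define $\vec y^t_{\Delta t}(\vec x)=\vec x-\Delta t\,\vec u(\vec x,t)$. Then for every $\vec x\in\Omega$ and every $t\in[\Delta t,T]$, $\vec y^t_{\Delta t}(\vec x)\in\Omega$. *)

theory Defs
  imports "HOL-Analysis.Analysis"
begin

definition unit_cube :: "(real^'n) set" where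
  "unit_cube = box 0 One"

definition cube_outward_normal :: "real^'n \<Rightarrow> real^'n \<Rightarrow> bool" where
  "cube_outward_normal x n \<longleftrightarrow>
     (\<exists>i. (\<forall>j. j \<noteq> i \<longrightarrow> 0 < x$j \<and> x$j < 1) \<and>
          ((x$i = 0 \<and> n = - axis i 1) \<or> (x$i = 1 \<and> n = axis i 1)))"

text \<open>W^{1,\<infinity>}(\<Omega>) on the convex domain \<Omega>, represented by its (unique)
Lipschitz representative: bounded and Lipschitz on \<Omega>.\<close>
definition W1inf_on :: "('a::metric_space) set \<Rightarrow> ('a \<Rightarrow> 'b::real_normed_vector) \<Rightarrow> bool" where
  "W1inf_on S f \<longleftrightarrow> bounded (f ` S) \<and> (\<exists>L. \<forall>x\<in>S. \<forall>y\<in>S. dist (f x) (f y) \<le> L * dist x y)"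

text \<open>\<parallel>\<nabla> f\<parallel>_\<infinity> = best Lipschitz constant (operator norm of the gradient, convex domain).\<close>
definition lip_const :: "('a::metric_space) set \<Rightarrow> ('a \<Rightarrow> 'b::real_normed_vector) \<Rightarrow> real" where
  "lip_const S f = Inf {L. 0 \<le> L \<and> (\<forall>x\<in>S. \<forall>y\<in>S. dist (f x) (f y) \<le> L * dist x y)}"

definition W1inf_norm :: "('a::metric_space) set \<Rightarrow> ('a \<Rightarrow> 'b::real_normed_vector) \<Rightarrow> real" where
  "W1inf_norm S f = max (SUP x\<in>S. norm (f x)) (lip_const S f)"

definition C0_W1inf :: "('a::metric_space) set \<Rightarrow> ('a \<Rightarrow> real \<Rightarrow> 'b::real_normed_vector) \<Rightarrow> real \<Rightarrow> bool" where
  "C0_W1inf S u T \<longleftrightarrow>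
     (\<forall>t\<in>{0..T}. W1inf_on S (\<lambda>x. u x t)) \<and>
     (\<forall>t\<in>{0..T}. \<forall>e>0. \<exists>d>0. \<forall>s\<in>{0..T}. \<bar>s - t\<bar> < d \<longrightarrow>
         W1inf_norm S (\<lambda>x. u x s - u x t) < e)"

definition C0_W1inf_norm :: "('a::metric_space) set \<Rightarrow> ('a \<Rightarrow> real \<Rightarrow> 'b::real_normed_vector) \<Rightarrow> real \<Rightarrow> real" where
  "C0_W1inf_norm S u T = (SUP t\<in>{0..T}. W1inf_norm S (\<lambda>x. u x t))"

definition foot :: "('a::real_vector \<Rightarrow> real \<Rightarrow> 'a) \<Rightarrow> real \<Rightarrow> real \<Rightarrow> 'a \<Rightarrow> 'a" where
  "foot u dt t x = x - dt *\<^sub>R u x t"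

end

theory Submission
  imports Defs
begin

text \<open>Each coordinate of the velocity vanishes on the two faces of the cube orthogonal to
  that coordinate, so by the Lipschitz bound its modulus at x is at most L times the distance
  of x to either face. Hence one time step of length \<Delta>t with \<Delta>t L < 1 moves x by strictly
  less than its distance to each face, and the foot x - \<Delta>t u(x,t) stays in the cube. That
  the Lipschitz constant of u(\<cdot>,t) is at most the C^0([0,T];W^{1,\<infinity>}) norm needs the
  supremum defining that norm to be finite: t \<mapsto> \<parallel>u(\<cdot>,t)\<parallel>_{W^{1,\<infinity>}} is continuous on the compact [0,T].\<close>

lemma lip_const_eq_Inf_lipschitz_on: "lip_const S f = Inf {L. L-lipschitz_on S f}"
  unfolding lip_const_def lipschitz_on_def ..

lemma W1inf_on_iff_lipschitz_on:
  "W1inf_on S f \<longleftrightarrow> bounded (f ` S) \<and> (\<exists>L. L-lipschitz_on S f)"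
proof -
  have "(\<exists>L. \<forall>x\<in>S. \<forall>y\<in>S. dist (f x) (f y) \<le> L * dist x y) \<longleftrightarrow> (\<exists>L. L-lipschitz_on S f)"
  proof
    assume "\<exists>L. \<forall>x\<in>S. \<forall>y\<in>S. dist (f x) (f y) \<le> L * dist x y"
    then obtain L where L: "\<forall>x\<in>S. \<forall>y\<in>S. dist (f x) (f y) \<le> L * dist x y" by blast
    have "dist (f x) (f y) \<le> max L 0 * dist x y" if "x \<in> S" "y \<in> S" for x y
      using L that order_trans[OF _ mult_right_mono[of L "max L 0" "dist x y"]] by simp
    then have "(max L 0)-lipschitz_on S f"
      by (intro lipschitz_onI) auto
    then show "\<exists>L. L-lipschitz_on S f" ..
  qed (auto simp: lipschitz_on_def)
  then show ?thesis unfolding W1inf_on_def by simp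
qed

lemma lip_const_le: "L-lipschitz_on S f \<Longrightarrow> lip_const S f \<le> L"
  unfolding lip_const_eq_Inf_lipschitz_on
  by (rule cInf_lower) (auto intro: bdd_belowI[of _ 0] lipschitz_on_nonneg)

lemma lipschitz_on_lip_const:
  assumes "L-lipschitz_on S f"
  shows "(lip_const S f)-lipschitz_on S f"
proof (rule lipschitz_onI)
  have ne: "{L. L-lipschitz_on S f} \<noteq> {}" using assms by blast
  show "0 \<le> lip_const S f"
    unfolding lip_const_eq_Inf_lipschitz_on by (rule cInf_greatest[OF ne]) (auto intro: lipschitz_on_nonneg)
  fix x y assume xy: "x \<in> S" "y \<in> S"
  show "dist (f x) (f y) \<le> lip_const S f * dist x y"
  proof (cases "x = y")
    case False
    then have d: "0 < dist x y" by simp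
    have "dist (f x) (f y) / dist x y \<le> lip_const S f"
      unfolding lip_const_eq_Inf_lipschitz_on
      by (rule cInf_greatest[OF ne]) (use d xy in \<open>auto simp: divide_le_eq dest: lipschitz_onD\<close>)
    then show ?thesis using d by (simp add: divide_le_eq)
  qed simp
qed

lemma W1inf_on_diff:
  "W1inf_on S f \<Longrightarrow> W1inf_on S g \<Longrightarrow> W1inf_on S (\<lambda>x. f x - g x)"
  unfolding W1inf_on_iff_lipschitz_on by (blast intro: bounded_minus_comp lipschitz_on_diff)

lemma W1inf_norm_add_le:
  assumes S: "S \<noteq> {}" and f: "W1inf_on S f" and g: "W1inf_on S g"
  shows "W1inf_norm S (\<lambda>x. f x + g x) \<le> W1inf_norm S f + W1inf_norm S g"
proof -
  have bdd: "bdd_above ((\<lambda>x. norm (h x)) ` S)" if "W1inf_on S h" for h :: "'a \<Rightarrow> 'b"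
    using that unfolding W1inf_on_def bounded_iff by (auto intro: bdd_aboveI2)
  have sup: "(SUP x\<in>S. norm (f x + g x)) \<le> (SUP x\<in>S. norm (f x)) + (SUP x\<in>S. norm (g x))"
  proof (rule cSUP_least[OF S])
    fix x assume x: "x \<in> S"
    have "norm (f x + g x) \<le> norm (f x) + norm (g x)" by (rule norm_triangle_ineq)
    also have "\<dots> \<le> (SUP x\<in>S. norm (f x)) + (SUP x\<in>S. norm (g x))"
      by (intro add_mono cSUP_upper[OF x] bdd f g)
    finally show "norm (f x + g x) \<le> \<dots>" .
  qed
  have "(lip_const S f + lip_const S g)-lipschitz_on S (\<lambda>x. f x + g x)"
    using f g unfolding W1inf_on_iff_lipschitz_on by (blast intro: lipschitz_on_add lipschitz_on_lip_const)
  then have "lip_const S (\<lambda>x. f x + g x) \<le> lip_const S f + lip_const S g"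
    by (rule lip_const_le)
  with sup show ?thesis unfolding W1inf_norm_def by linarith
qed

lemma W1inf_norm_uminus: "W1inf_norm S (\<lambda>x. - f x) = W1inf_norm S f"
  unfolding W1inf_norm_def lip_const_eq_Inf_lipschitz_on by simp

lemma continuous_on_W1inf_norm:
  assumes S: "S \<noteq> {}" and reg: "C0_W1inf S u T"
  shows "continuous_on {0..T} (\<lambda>t. W1inf_norm S (\<lambda>x. u x t))"
  unfolding continuous_on_iff
proof (intro ballI allI impI)
  fix t e assume t: "t \<in> {0..T}" and e: "(0::real) < e"
  have W: "\<And>s. s \<in> {0..T} \<Longrightarrow> W1inf_on S (\<lambda>x. u x s)"
    using reg unfolding C0_W1inf_def by blast
  obtain d where "d > 0" and d: "\<forall>s\<in>{0..T}. \<bar>s - t\<bar> < d \<longrightarrow> W1inf_norm S (\<lambda>x. u x s - u x t) < e"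
    using reg t e unfolding C0_W1inf_def by blast
  have "dist (W1inf_norm S (\<lambda>x. u x s)) (W1inf_norm S (\<lambda>x. u x t)) < e"
    if s: "s \<in> {0..T}" "dist s t < d" for s
  proof -
    have "W1inf_norm S (\<lambda>x. u x s) \<le> W1inf_norm S (\<lambda>x. u x t) + W1inf_norm S (\<lambda>x. u x s - u x t)"
      using W1inf_norm_add_le[OF S W[OF t] W1inf_on_diff[OF W[OF s(1)] W[OF t]]] by simp
    moreover have "W1inf_norm S (\<lambda>x. u x t) \<le> W1inf_norm S (\<lambda>x. u x s) + W1inf_norm S (\<lambda>x. u x s - u x t)"
      using W1inf_norm_add_le[OF S W[OF s(1)] W1inf_on_diff[OF W[OF t] W[OF s(1)]]]
        W1inf_norm_uminus[of S "\<lambda>x. u x s - u x t"] by simp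
    moreover have "W1inf_norm S (\<lambda>x. u x s - u x t) < e"
      using d s by (simp add: dist_real_def)
    ultimately show ?thesis by (simp add: dist_real_def)
  qed
  with \<open>d > 0\<close> show "\<exists>d>0. \<forall>s\<in>{0..T}. dist s t < d \<longrightarrow>
      dist (W1inf_norm S (\<lambda>x. u x s)) (W1inf_norm S (\<lambda>x. u x t)) < e"
    by blast
qed

lemma lip_const_le_C0_W1inf_norm:
  assumes S: "S \<noteq> {}" and reg: "C0_W1inf S u T" and t: "t \<in> {0..T}"
  shows "lip_const S (\<lambda>x. u x t) \<le> C0_W1inf_norm S u T"
proof -
  have "bdd_above ((\<lambda>t. W1inf_norm S (\<lambda>x. u x t)) ` {0..T})"
    by (intro bounded_imp_bdd_above compact_imp_bounded compact_continuous_image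
        continuous_on_W1inf_norm[OF S reg] compact_Icc)
  then have "W1inf_norm S (\<lambda>x. u x t) \<le> C0_W1inf_norm S u T"
    unfolding C0_W1inf_norm_def by (rule cSUP_upper[OF t])
  then show ?thesis unfolding W1inf_norm_def by linarith
qed

lemma lipschitz_on_inner_left:
  assumes "L-lipschitz_on S v" "norm n \<le> 1"
  shows "L-lipschitz_on S (\<lambda>z. v z \<bullet> n)"
proof (rule lipschitz_onI)
  fix x y assume xy: "x \<in> S" "y \<in> S"
  have "dist (v x \<bullet> n) (v y \<bullet> n) = \<bar>(v x - v y) \<bullet> n\<bar>"
    by (simp add: dist_real_def inner_diff_left)
  also have "\<dots> \<le> norm (v x - v y) * norm n" by (rule Cauchy_Schwarz_ineq2)
  also have "\<dots> \<le> dist (v x) (v y)"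
    using assms(2) by (simp add: dist_norm mult_left_le)
  also have "\<dots> \<le> L * dist x y" using assms(1) xy by (rule lipschitz_onD)
  finally show "dist (v x \<bullet> n) (v y \<bullet> n) \<le> L * dist x y" .
qed (use assms lipschitz_on_nonneg in blast)

lemma lipschitz_on_norm_le_of_tendsto_zero:
  fixes g :: "'a::metric_space \<Rightarrow> 'b::real_normed_vector"
  assumes lip: "L-lipschitz_on S g" and x: "x \<in> S" and p: "p islimpt S"
    and lim: "(g \<longlongrightarrow> 0) (at p within S)"
  shows "norm (g x) \<le> L * dist x p"
proof -
  have "((\<lambda>z. norm (g z) + L * dist x z) \<longlongrightarrow> 0 + L * dist x p) (at p within S)"
    by (intro tendsto_add tendsto_mult tendsto_dist tendsto_const tendsto_ident_at tendsto_norm_zero lim)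
  moreover have "\<forall>\<^sub>F z in at p within S. norm (g x) \<le> norm (g z) + L * dist x z"
    unfolding eventually_at_filter
  proof (intro always_eventually allI impI)
    fix z assume "z \<in> S"
    then have "dist (g x) (g z) \<le> L * dist x z" using lip x by (intro lipschitz_onD)
    then show "norm (g x) \<le> norm (g z) + L * dist x z"
      using norm_triangle_ineq2[of "g x" "g z"] by (simp add: dist_norm)
  qed
  ultimately have "norm (g x) \<le> 0 + L * dist x p"
    using p by (intro tendsto_le[OF _ _ tendsto_const]) (auto simp: trivial_limit_within)
  then show ?thesis by simp
qed

lemma mem_unit_cube_iff: "x \<in> unit_cube \<longleftrightarrow> (\<forall>i. 0 < x $ i \<and> x $ i < 1)"
  unfolding unit_cube_def mem_box_cart Cart_1[symmetric] by simp

lemma unit_cube_face_point: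
  fixes x :: "real^'n"
  assumes x: "x \<in> unit_cube" and c: "c = 0 \<or> c = 1"
  shows "(\<chi> j. if j = i then c else x $ j) islimpt unit_cube"
    and "dist x (\<chi> j. if j = i then c else x $ j) = \<bar>x $ i - c\<bar>"
proof -
  let ?p = "\<chi> j. if j = i then c else x $ j"
  have "box 0 (One::real^'n) \<noteq> {}" using x unfolding unit_cube_def by blast
  moreover have "?p \<in> cbox 0 One" "?p \<notin> unit_cube"
    using x c unfolding mem_box_cart Cart_1[symmetric] mem_unit_cube_iff by (auto simp: less_imp_le)
  ultimately show "?p islimpt unit_cube"
    unfolding unit_cube_def by (metis closure_box UnE closure_def mem_Collect_eq)
  have "x - ?p = (x $ i - c) *\<^sub>R axis i 1"
    by (simp add: vec_eq_iff axis_def)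
  then show "dist x ?p = \<bar>x $ i - c\<bar>"
    by (simp add: dist_norm)
qed

lemma unit_cube_coordinate_bound:
  fixes v :: "real^'n \<Rightarrow> real^'n"
  assumes lip: "L-lipschitz_on unit_cube v"
    and bc: "\<forall>p n. cube_outward_normal p n \<longrightarrow> ((\<lambda>z. v z \<bullet> n) \<longlongrightarrow> 0) (at p within unit_cube)"
    and x: "x \<in> unit_cube" and c: "c = 0 \<or> c = 1"
  shows "\<bar>v x $ i\<bar> \<le> L * \<bar>x $ i - c\<bar>"
proof -
  define p where "p = (\<chi> j. if j = i then c else x $ j)"
  define n where "n = (if c = 0 then - axis i 1 else axis i (1::real))"
  have "cube_outward_normal p n"
    using x c unfolding cube_outward_normal_def mem_unit_cube_iff p_def n_def
    by (intro exI[of _ i]) auto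
  with bc have lim: "((\<lambda>z. v z \<bullet> n) \<longlongrightarrow> 0) (at p within unit_cube)" by blast
  have "norm n \<le> 1" unfolding n_def by simp
  moreover have "p islimpt unit_cube"
    unfolding p_def by (rule unit_cube_face_point(1)[OF x c])
  ultimately have "norm (v x \<bullet> n) \<le> L * dist x p"
    using lipschitz_on_norm_le_of_tendsto_zero[OF lipschitz_on_inner_left[OF lip] x _ lim] by blast
  moreover have "\<bar>v x \<bullet> n\<bar> = \<bar>v x $ i\<bar>" by (simp add: n_def inner_axis)
  ultimately show ?thesis
    using unit_cube_face_point(2)[OF x c, of i] unfolding p_def by simp
qed

lemma diff_scaleR_in_unit_cube:
  fixes v :: "real^'n \<Rightarrow> real^'n"
  assumes lip: "L-lipschitz_on unit_cube v"
    and bc: "\<forall>p n. cube_outward_normal p n \<longrightarrow> ((\<lambda>z. v z \<bullet> n) \<longlongrightarrow> 0) (at p within unit_cube)"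
    and x: "x \<in> unit_cube" and dt: "0 \<le> dt" "dt * L < 1"
  shows "x - dt *\<^sub>R v x \<in> unit_cube"
  unfolding mem_unit_cube_iff
proof
  fix i
  have step: "dt * \<bar>v x $ i\<bar> < d" if bound: "\<bar>v x $ i\<bar> \<le> L * d" and "0 < d" for d
  proof -
    have "dt * \<bar>v x $ i\<bar> \<le> (dt * L) * d"
      using mult_left_mono[OF bound dt(1)] by (simp add: mult.assoc)
    also have "\<dots> < 1 * d" using dt(2) \<open>0 < d\<close> by (rule mult_strict_right_mono)
    finally show ?thesis by simp
  qed
  have xi: "0 < x $ i" "x $ i < 1" using x unfolding mem_unit_cube_iff by auto
  have "dt * \<bar>v x $ i\<bar> < x $ i"
    using unit_cube_coordinate_bound[OF lip bc x, of 0 i] xi by (intro step) simp_all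
  moreover have "dt * \<bar>v x $ i\<bar> < 1 - x $ i"
    using unit_cube_coordinate_bound[OF lip bc x, of 1 i] xi by (intro step) simp_all
  moreover have "\<bar>dt * v x $ i\<bar> = dt * \<bar>v x $ i\<bar>" using dt(1) by (simp add: abs_mult)
  ultimately have "\<bar>dt * v x $ i\<bar> < x $ i" "\<bar>dt * v x $ i\<bar> < 1 - x $ i" by simp_all
  then show "0 < (x - dt *\<^sub>R v x) $ i \<and> (x - dt *\<^sub>R v x) $ i < 1"
    unfolding abs_less_iff by simp
qed

theorem lemma2:
  fixes u :: "real^'n \<Rightarrow> real \<Rightarrow> real^'n" and T dt :: real
  assumes dim: "CARD('n) = 2 \<or> CARD('n) = 3"
    and reg: "C0_W1inf unit_cube u T"
    and bc: "\<forall>t\<in>{0..T}. \<forall>x n. cube_outward_normal x n \<longrightarrow>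
               ((\<lambda>z. u z t \<bullet> n) \<longlongrightarrow> 0) (at x within unit_cube)"
    and dt_pos: "0 < dt" and dt_lt: "dt < T"
    and cfl: "dt * C0_W1inf_norm unit_cube u T < 1"
  shows "\<forall>x\<in>unit_cube. \<forall>t\<in>{dt..T}. foot u dt t x \<in> unit_cube"
proof (intro ballI)
  fix x :: "real^'n" and t assume x: "x \<in> unit_cube" and "t \<in> {dt..T}"
  with dt_pos have t: "t \<in> {0..T}" by simp
  have ne: "(unit_cube :: (real^'n) set) \<noteq> {}" using x by blast
  let ?L = "lip_const unit_cube (\<lambda>z. u z t)"
  have "W1inf_on unit_cube (\<lambda>z. u z t)" using reg t unfolding C0_W1inf_def by simp
  then have lip: "?L-lipschitz_on unit_cube (\<lambda>z. u z t)"
    unfolding W1inf_on_iff_lipschitz_on by (blast intro: lipschitz_on_lip_const)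
  have "dt * ?L \<le> dt * C0_W1inf_norm unit_cube u T"
    using lip_const_le_C0_W1inf_norm[OF ne reg t] dt_pos by (intro mult_left_mono) auto
  with cfl have cfl_t: "dt * ?L < 1" by linarith
  have bc_t: "\<forall>p n. cube_outward_normal p n \<longrightarrow>
      ((\<lambda>z. u z t \<bullet> n) \<longlongrightarrow> 0) (at p within unit_cube)"
    using bc t by blast
  show "foot u dt t x \<in> unit_cube"
    unfolding foot_def using dt_pos cfl_t by (intro diff_scaleR_in_unit_cube[OF lip bc_t x]) auto
qed

end
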